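(* Let $(H,B_1,B_2)$ be a Rota-Baxter system of Hopf algebras, $A$ a unital commutative algebra, and $\mathcal{B}_1,\mathcal{B}_2:\mathrm{Char}(H,A)\to\mathrm{Char}(H_{B_1,B_2},A)$ given by $\mathcal{B}_i(f)(a)=f(B_i(a))$, $a\in H_1$. The Cayley transform $\Theta:\operatorname{Im}(\mathcal{B}_1)/\mathcal{B}_1(\ker\mathcal{B}_2)\to\operatorname{Im}(\mathcal{B}_2)/\mathcal{B}_2(\ker\mathcal{B}_1)$, $\Theta(\overline{\mathcal{B}_1(f)})=\overline{\mathcal{B}_2(f)}$ for $f\in\mathrm{Char}(H,A)$, is a group isomorphism.
   Context: $\mathbb{F}$ is a field of characteristic $0$; Sweedler notation $\Delta(a)=a_1\otimes a_2$. A Rota-Baxter system of Hopf algebras is a triple $(H,B_1,B_2)$ with $(H,\cdot,1,\Delta,\epsilon,S)$ a cocommutative Hopf algebra, $B_1,B_2$ coalgebra homomorphisms with $B_1(1)=B_2(1)=1$, and for all $a,b\in H$: $B_1(a)B_1(b)=B_1(B_1(a_1)bS(B_2(a_2)))$, $B_2(a)B_2(b)=B_2(B_1(a_1)bS(B_2(a_2)))$. Descendent operation $a\circ b=B_1(a_1)bS(B_2(a_2))$, cocycle $\sigma(a)=B_1(a_1)S(B_2(a_2))$, $H_1=\operatorname{Im}(\sigma)$; $H_{B_1,B_2}$ is the Hopf algebra $H_1$ with product $\circ$, unit $1$, restricted $\Delta,\epsilon$, antipode $T(a)=S(B_1(a_1))B_2(a_2)$. Convolution: $(f\ast g)(a)=f(a_1)g(a_2)$.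 $\mathrm{Char}(H,A)$ is the group under $\ast$ of algebra homomorphisms $H\to A$; $\mathrm{Char}(H_{B_1,B_2},A)$ is the group under convolution (w.r.t. the coproduct of $H_1$) of algebra homomorphisms $(H_1,\circ,1)\to A$. The subgroups $\mathcal{B}_1(\ker\mathcal{B}_2)\trianglelefteq\operatorname{Im}(\mathcal{B}_1)$ and $\mathcal{B}_2(\ker\mathcal{B}_1)\trianglelefteq\operatorname{Im}(\mathcal{B}_2)$ are normal, and bars denote cosets. *)

theory Defs
  imports Complex_Main "HOL-Algebra.Coset"
begin

text \<open>An element of H \<otimes> H (resp. H \<otimes> H \<otimes> H) is represented by a finite list of
  pairs (triples) of simple tensors.  Two representations denote the same tensor
  iff they agree under every bilinear (trilinear) functional H \<times> H \<rightarrow> F.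
  This is exactly equality in the algebraic tensor product over the field F.\<close>

definition bilin :: "('k::field \<Rightarrow> 'h::ab_group_add \<Rightarrow> 'h) \<Rightarrow> ('h \<Rightarrow> 'h \<Rightarrow> 'k) \<Rightarrow> bool" where
  "bilin sc \<beta> \<longleftrightarrow> (\<forall>x. Vector_Spaces.linear sc (*) (\<beta> x)) \<and>
                    (\<forall>y. Vector_Spaces.linear sc (*) (\<lambda>x. \<beta> x y))"

definition trilin :: "('k::field \<Rightarrow> 'h::ab_group_add \<Rightarrow> 'h) \<Rightarrow> ('h \<Rightarrow> 'h \<Rightarrow> 'h \<Rightarrow> 'k) \<Rightarrow> bool" where
  "trilin sc \<tau> \<longleftrightarrow> (\<forall>x y. Vector_Spaces.linear sc (*) (\<tau> x y)) \<and>
                    (\<forall>x z. Vector_Spaces.linear sc (*) (\<lambda>y. \<tau> x y z)) \<and>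
                    (\<forall>y z. Vector_Spaces.linear sc (*) (\<lambda>x. \<tau> x y z))"

definition teq2 :: "('k::field \<Rightarrow> 'h::ab_group_add \<Rightarrow> 'h) \<Rightarrow> ('h \<times> 'h) list \<Rightarrow> ('h \<times> 'h) list \<Rightarrow> bool" where
  "teq2 sc xs ys \<longleftrightarrow> (\<forall>\<beta>. bilin sc \<beta> \<longrightarrow>
       (\<Sum>(a,b)\<leftarrow>xs. \<beta> a b) = (\<Sum>(a,b)\<leftarrow>ys. \<beta> a b))"

text \<open>H is the type 'h with its ring structure (product, unit), an F-vector space
  structure sc compatible with the product, comultiplication cm (Sweedler
  representation of \<Delta>), counit eps, antipode ant.\<close>

definition cocomm_hopf ::
  "('k::field \<Rightarrow> 'h::ring_1 \<Rightarrow> 'h) \<Rightarrow> ('h \<Rightarrow> ('h \<times> 'h) list) \<Rightarrow> ('h \<Rightarrow> 'k) \<Rightarrow> ('h \<Rightarrow> 'h) \<Rightarrow> bool" where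
  "cocomm_hopf sc cm eps ant \<longleftrightarrow>
     vector_space sc \<and>
     (\<forall>c x y. sc c (x * y) = sc c x * y \<and> sc c (x * y) = x * sc c y) \<and>
     \<comment> \<open>\<Delta> linear\<close>
     (\<forall>c x y. teq2 sc (cm (sc c x + y)) (map (\<lambda>(a,b). (sc c a, b)) (cm x) @ cm y)) \<and>
     \<comment> \<open>coassociativity\<close>
     (\<forall>x \<tau>. trilin sc \<tau> \<longrightarrow>
        (\<Sum>(a,b)\<leftarrow>cm x. \<Sum>(c,d)\<leftarrow>cm a. \<tau> c d b) = (\<Sum>(a,b)\<leftarrow>cm x. \<Sum>(c,d)\<leftarrow>cm b. \<tau> a c d)) \<and>
     \<comment> \<open>counit\<close>
     Vector_Spaces.linear sc (*) eps \<and>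
     (\<forall>x. (\<Sum>(a,b)\<leftarrow>cm x. sc (eps a) b) = x \<and> (\<Sum>(a,b)\<leftarrow>cm x. sc (eps b) a) = x) \<and>
     \<comment> \<open>\<Delta> and \<epsilon> are algebra maps\<close>
     (\<forall>x y. teq2 sc (cm (x * y)) (concat (map (\<lambda>(a,b). map (\<lambda>(c,d). (a * c, b * d)) (cm y)) (cm x)))) \<and>
     teq2 sc (cm 1) [(1,1)] \<and>
     (\<forall>x y. eps (x * y) = eps x * eps y) \<and> eps 1 = 1 \<and>
     \<comment> \<open>antipode\<close>
     Vector_Spaces.linear sc sc ant \<and>
     (\<forall>x. (\<Sum>(a,b)\<leftarrow>cm x. ant a * b) = sc (eps x) 1 \<and> (\<Sum>(a,b)\<leftarrow>cm x. a * ant b) = sc (eps x) 1) \<and>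
     \<comment> \<open>cocommutativity\<close>
     (\<forall>x. teq2 sc (cm x) (map (\<lambda>(a,b). (b,a)) (cm x)))"

definition coalg_hom ::
  "('k::field \<Rightarrow> 'h::ring_1 \<Rightarrow> 'h) \<Rightarrow> ('h \<Rightarrow> ('h \<times> 'h) list) \<Rightarrow> ('h \<Rightarrow> 'k) \<Rightarrow> ('h \<Rightarrow> 'h) \<Rightarrow> bool" where
  "coalg_hom sc cm eps B \<longleftrightarrow> Vector_Spaces.linear sc sc B \<and>
     (\<forall>x. teq2 sc (cm (B x)) (map (\<lambda>(a,b). (B a, B b)) (cm x))) \<and>
     (\<forall>x. eps (B x) = eps x)"

definition rb_circ :: "('h::ring_1 \<Rightarrow> ('h \<times> 'h) list) \<Rightarrow> ('h \<Rightarrow> 'h) \<Rightarrow> ('h \<Rightarrow> 'h) \<Rightarrow> ('h \<Rightarrow> 'h) \<Rightarrow> 'h \<Rightarrow> 'h \<Rightarrow> 'h" where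
  "rb_circ cm ant B1 B2 a b = (\<Sum>(x,y)\<leftarrow>cm a. B1 x * b * ant (B2 y))"

definition rb_sigma :: "('h::ring_1 \<Rightarrow> ('h \<times> 'h) list) \<Rightarrow> ('h \<Rightarrow> 'h) \<Rightarrow> ('h \<Rightarrow> 'h) \<Rightarrow> ('h \<Rightarrow> 'h) \<Rightarrow> 'h \<Rightarrow> 'h" where
  "rb_sigma cm ant B1 B2 a = (\<Sum>(x,y)\<leftarrow>cm a. B1 x * ant (B2 y))"

definition rb_H1 :: "('h::ring_1 \<Rightarrow> ('h \<times> 'h) list) \<Rightarrow> ('h \<Rightarrow> 'h) \<Rightarrow> ('h \<Rightarrow> 'h) \<Rightarrow> ('h \<Rightarrow> 'h) \<Rightarrow> 'h set" where
  "rb_H1 cm ant B1 B2 = range (rb_sigma cm ant B1 B2)"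

definition rb_system ::
  "('k::field_char_0 \<Rightarrow> 'h::ring_1 \<Rightarrow> 'h) \<Rightarrow> ('h \<Rightarrow> ('h \<times> 'h) list) \<Rightarrow> ('h \<Rightarrow> 'k) \<Rightarrow> ('h \<Rightarrow> 'h)
     \<Rightarrow> ('h \<Rightarrow> 'h) \<Rightarrow> ('h \<Rightarrow> 'h) \<Rightarrow> bool" where
  "rb_system sc cm eps ant B1 B2 \<longleftrightarrow> cocomm_hopf sc cm eps ant \<and>
     coalg_hom sc cm eps B1 \<and> coalg_hom sc cm eps B2 \<and> B1 1 = 1 \<and> B2 1 = 1 \<and>
     (\<forall>a b. B1 a * B1 b = B1 (rb_circ cm ant B1 B2 a b)) \<and>
     (\<forall>a b. B2 a * B2 b = B2 (rb_circ cm ant B1 B2 a b))"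

definition comm_algebra :: "('k::field \<Rightarrow> 'a::comm_ring_1 \<Rightarrow> 'a) \<Rightarrow> bool" where
  "comm_algebra scA \<longleftrightarrow> vector_space scA \<and> (\<forall>c x y. scA c (x * y) = scA c x * y)"

definition charH :: "('k::field \<Rightarrow> 'h::ring_1 \<Rightarrow> 'h) \<Rightarrow> ('k \<Rightarrow> 'a::comm_ring_1 \<Rightarrow> 'a) \<Rightarrow> ('h \<Rightarrow> 'a) set" where
  "charH sc scA = {f. Vector_Spaces.linear sc scA f \<and> (\<forall>x y. f (x * y) = f x * f y) \<and> f 1 = 1}"

definition CharH_grp ::
  "('k::field \<Rightarrow> 'h::ring_1 \<Rightarrow> 'h) \<Rightarrow> ('h \<Rightarrow> ('h \<times> 'h) list) \<Rightarrow> ('h \<Rightarrow> 'k)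
     \<Rightarrow> ('k \<Rightarrow> 'a::comm_ring_1 \<Rightarrow> 'a) \<Rightarrow> ('h \<Rightarrow> 'a) monoid" where
  "CharH_grp sc cm eps scA =
     \<lparr>carrier = charH sc scA,
      mult = (\<lambda>f g a. \<Sum>(x,y)\<leftarrow>cm a. f x * g y),
      one = (\<lambda>a. scA (eps a) 1)\<rparr>"

text \<open>The coproduct of H_1 = Im(sigma): a Sweedler representation of \<Delta>(a) whose
  tensor factors lie in H_1 (such a representation exists since H_1 is a
  subcoalgebra; the resulting convolution does not depend on the choice).\<close>

definition rb_cm1 ::
  "('k::field_char_0 \<Rightarrow> 'h::ring_1 \<Rightarrow> 'h) \<Rightarrow> ('h \<Rightarrow> ('h \<times> 'h) list) \<Rightarrow> ('h \<Rightarrow> 'h)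
     \<Rightarrow> ('h \<Rightarrow> 'h) \<Rightarrow> ('h \<Rightarrow> 'h) \<Rightarrow> 'h \<Rightarrow> ('h \<times> 'h) list" where
  "rb_cm1 sc cm ant B1 B2 a =
     (SOME xs. set xs \<subseteq> rb_H1 cm ant B1 B2 \<times> rb_H1 cm ant B1 B2 \<and> teq2 sc xs (cm a))"

text \<open>Char(H_{B1,B2},A): algebra homomorphisms (H_1, circ, 1) \<rightarrow> A.  They are
  represented as functions on 'h that vanish outside H_1 (so that equality of
  characters is equality on H_1).\<close>

definition charH1 ::
  "('k::field_char_0 \<Rightarrow> 'h::ring_1 \<Rightarrow> 'h) \<Rightarrow> ('h \<Rightarrow> ('h \<times> 'h) list) \<Rightarrow> ('h \<Rightarrow> 'h)
     \<Rightarrow> ('h \<Rightarrow> 'h) \<Rightarrow> ('h \<Rightarrow> 'h) \<Rightarrow> ('k \<Rightarrow> 'a::comm_ring_1 \<Rightarrow> 'a) \<Rightarrow> ('h \<Rightarrow> 'a) set" where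
  "charH1 sc cm ant B1 B2 scA =
     {f. (\<forall>a. a \<notin> rb_H1 cm ant B1 B2 \<longrightarrow> f a = 0) \<and>
         (\<forall>c x y. x \<in> rb_H1 cm ant B1 B2 \<longrightarrow> y \<in> rb_H1 cm ant B1 B2 \<longrightarrow>
              f (sc c x + y) = scA c (f x) + f y) \<and>
         (\<forall>x y. x \<in> rb_H1 cm ant B1 B2 \<longrightarrow> y \<in> rb_H1 cm ant B1 B2 \<longrightarrow>
              f (rb_circ cm ant B1 B2 x y) = f x * f y) \<and>
         f 1 = 1}"

definition CharH1_grp ::
  "('k::field_char_0 \<Rightarrow> 'h::ring_1 \<Rightarrow> 'h) \<Rightarrow> ('h \<Rightarrow> ('h \<times> 'h) list) \<Rightarrow> ('h \<Rightarrow> 'k) \<Rightarrow> ('h \<Rightarrow> 'h)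
     \<Rightarrow> ('h \<Rightarrow> 'h) \<Rightarrow> ('h \<Rightarrow> 'h) \<Rightarrow> ('k \<Rightarrow> 'a::comm_ring_1 \<Rightarrow> 'a) \<Rightarrow> ('h \<Rightarrow> 'a) monoid" where
  "CharH1_grp sc cm eps ant B1 B2 scA =
     \<lparr>carrier = charH1 sc cm ant B1 B2 scA,
      mult = (\<lambda>f g a. if a \<in> rb_H1 cm ant B1 B2
                       then (\<Sum>(x,y)\<leftarrow>rb_cm1 sc cm ant B1 B2 a. f x * g y) else 0),
      one = (\<lambda>a. if a \<in> rb_H1 cm ant B1 B2 then scA (eps a) 1 else 0)\<rparr>"

definition calB ::
  "('h::ring_1 \<Rightarrow> ('h \<times> 'h) list) \<Rightarrow> ('h \<Rightarrow> 'h) \<Rightarrow> ('h \<Rightarrow> 'h) \<Rightarrow> ('h \<Rightarrow> 'h) \<Rightarrow> ('h \<Rightarrow> 'h)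
     \<Rightarrow> ('h \<Rightarrow> 'a::comm_ring_1) \<Rightarrow> ('h \<Rightarrow> 'a)" where
  "calB cm ant B1 B2 Bi f = (\<lambda>a. if a \<in> rb_H1 cm ant B1 B2 then f (Bi a) else 0)"

end

theory Submission
  imports Defs
begin

text \<open>Convolution makes \<open>Char(H,A)\<close> a group, inverses being given by composition with the
  antipode (which is anti-multiplicative). Since \<open>\<Delta>(\<sigma>(a)) = \<sigma>(a\<^sub>1) \<otimes> \<sigma>(a\<^sub>2)\<close>, \<open>H\<^sub>1\<close> is a
  subcoalgebra and both maps \<open>\<B>\<^sub>i\<close> are multiplicative for the convolution on \<open>H\<^sub>1\<close>; this
  step uses \<open>\<Delta>(S a) = S a\<^sub>1 \<otimes> S a\<^sub>2\<close> and cocommutativity. The rest is group theory: for two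
  homomorphisms \<open>h\<^sub>1, h\<^sub>2\<close> on a group \<open>G\<close>, both \<open>h\<^sub>1(G)/h\<^sub>1(ker h\<^sub>2)\<close> and
  \<open>h\<^sub>2(G)/h\<^sub>2(ker h\<^sub>1)\<close> are the quotient of \<open>G\<close> by \<open>ker h\<^sub>1 \<cdot> ker h\<^sub>2\<close>, compatibly with
  \<open>f \<mapsto> h\<^sub>i(f)\<close>, and the Cayley transform is the composite isomorphism.\<close>

definition lin_map :: "('k::field \<Rightarrow> 'b::ab_group_add \<Rightarrow> 'b) \<Rightarrow> ('k \<Rightarrow> 'c::ab_group_add \<Rightarrow> 'c) \<Rightarrow> ('b \<Rightarrow> 'c) \<Rightarrow> bool" where
  "lin_map s1 s2 f \<longleftrightarrow> (\<forall>x y. f (x + y) = f x + f y) \<and> (\<forall>c x. f (s1 c x) = s2 c (f x))"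

definition bilin_map :: "('k::field \<Rightarrow> 'h::ab_group_add \<Rightarrow> 'h) \<Rightarrow> ('k \<Rightarrow> 'v::ab_group_add \<Rightarrow> 'v) \<Rightarrow> ('h \<Rightarrow> 'h \<Rightarrow> 'v) \<Rightarrow> bool" where
  "bilin_map s sV F \<longleftrightarrow> (\<forall>a. lin_map s sV (F a)) \<and> (\<forall>b. lin_map s sV (\<lambda>a. F a b))"

definition trilin_map :: "('k::field \<Rightarrow> 'h::ab_group_add \<Rightarrow> 'h) \<Rightarrow> ('k \<Rightarrow> 'v::ab_group_add \<Rightarrow> 'v) \<Rightarrow> ('h \<Rightarrow> 'h \<Rightarrow> 'h \<Rightarrow> 'v) \<Rightarrow> bool" where
  "trilin_map s sV F \<longleftrightarrow> (\<forall>a b. lin_map s sV (F a b)) \<and> (\<forall>a c. lin_map s sV (\<lambda>b. F a b c)) \<and> (\<forall>b c. lin_map s sV (\<lambda>a. F a b c))"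

lemma linear_iff_lin_map:
  "Vector_Spaces.linear s1 s2 f \<longleftrightarrow> vector_space s1 \<and> vector_space s2 \<and> lin_map s1 s2 f"
  unfolding linear_iff_module_hom module_hom_iff module_iff_vector_space lin_map_def by auto

lemma lin_map_add: "lin_map s1 s2 f \<Longrightarrow> f (x + y) = f x + f y"
  by (simp add: lin_map_def)

lemma lin_map_scale: "lin_map s1 s2 f \<Longrightarrow> f (s1 c x) = s2 c (f x)"
  by (simp add: lin_map_def)

lemma lin_map_zero: "lin_map s1 s2 f \<Longrightarrow> f 0 = 0"
  by (metis add_cancel_right_right add_0 lin_map_add)

lemma lin_map_sum_list: "lin_map s1 s2 f \<Longrightarrow> f (\<Sum>x\<leftarrow>xs. g x) = (\<Sum>x\<leftarrow>xs. f (g x))"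
  by (induction xs) (auto simp: lin_map_zero lin_map_add)

lemma lin_map_id: "lin_map s s (\<lambda>x. x)"
  by (simp add: lin_map_def)

lemma lin_map_compose: "lin_map s1 s2 f \<Longrightarrow> lin_map s2 s3 g \<Longrightarrow> lin_map s1 s3 (\<lambda>x. g (f x))"
  by (simp add: lin_map_def)

lemma lin_map_scale_right:
  "vector_space s2 \<Longrightarrow> lin_map s1 s2 f \<Longrightarrow> lin_map s1 s2 (\<lambda>x. s2 c (f x))"
  by (simp add: lin_map_def vector_space.vector_space_assms(1,3) mult.commute)

lemma lin_map_sum_list_param:
  assumes "\<And>a b. lin_map s1 s2 (\<lambda>v. G v a b)" and "vector_space s2"
  shows "lin_map s1 s2 (\<lambda>v. \<Sum>(a,b)\<leftarrow>xs. G v a b)"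
proof (induction xs)
  case Nil
  show ?case
    using \<open>vector_space s2\<close> by (simp add: lin_map_def module.scale_zero_right module_iff_vector_space)
next
  case (Cons p xs)
  then show ?case
    using assms by (simp add: lin_map_def split_def vector_space.vector_space_assms(1) algebra_simps)
qed

lemma vector_space_field: "vector_space ((*) :: 'k::field \<Rightarrow> 'k \<Rightarrow> 'k)"
  by unfold_locales (auto simp: algebra_simps)

lemma vector_eq_if_functionals_eq:
  fixes s :: "'k::field \<Rightarrow> 'v::ab_group_add \<Rightarrow> 'v"
  assumes "vector_space s" and eq: "\<And>\<phi>. lin_map s (*) \<phi> \<Longrightarrow> \<phi> u = \<phi> w"
  shows "u = w"
proof (rule ccontr)
  assume "u \<noteq> w"
  interpret vp: vector_space_pair s "(*) :: 'k \<Rightarrow> 'k \<Rightarrow> 'k"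
    using assms(1) vector_space_field by (simp add: vector_space_pair_def)
  have "vp.vs1.independent {u - w}"
    using \<open>u \<noteq> w\<close> by simp
  from vp.linear_independent_extend[OF this, of "\<lambda>_. 1"]
  obtain \<phi> where "Vector_Spaces.linear s (*) \<phi>" and "\<phi> (u - w) = 1"
    by auto
  then have "lin_map s (*) \<phi>" and "\<phi> u - \<phi> w = 1"
    using lin_map_add[of s "(*)" \<phi> "u - w" w] by (auto simp: linear_iff_lin_map)
  moreover from eq[OF this(1)] have "\<phi> u - \<phi> w = 0"
    by simp
  ultimately show False
    by simp
qed

lemma bilin_iff_bilin_map: "vector_space s \<Longrightarrow> bilin s \<beta> \<longleftrightarrow> bilin_map s (*) \<beta>"
  by (simp add: bilin_def bilin_map_def linear_iff_lin_map vector_space_field)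

lemma trilin_iff_trilin_map: "vector_space s \<Longrightarrow> trilin s \<tau> \<longleftrightarrow> trilin_map s (*) \<tau>"
  by (simp add: trilin_def trilin_map_def linear_iff_lin_map vector_space_field)

lemma bilin_mapI [intro]:
  "(\<And>a. lin_map s sV (F a)) \<Longrightarrow> (\<And>b. lin_map s sV (\<lambda>a. F a b)) \<Longrightarrow> bilin_map s sV F"
  by (simp add: bilin_map_def)

lemma trilin_map_compose:
  "trilin_map s sV \<tau> \<Longrightarrow> lin_map sV sW \<phi> \<Longrightarrow> trilin_map s sW (\<lambda>a b c. \<phi> (\<tau> a b c))"
  by (simp add: trilin_map_def lin_map_compose[of s sV _ sW \<phi>])

lemma bilin_map_compose_left: "bilin_map s sV F \<Longrightarrow> lin_map s s f \<Longrightarrow> lin_map s sV (\<lambda>x. F (f x) b)"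
  by (auto simp: bilin_map_def intro: lin_map_compose)

lemma bilin_map_compose_right: "bilin_map s sV F \<Longrightarrow> lin_map s s f \<Longrightarrow> lin_map s sV (\<lambda>x. F a (f x))"
  by (auto simp: bilin_map_def intro: lin_map_compose)

text \<open>Equality in \<open>H \<otimes> H\<close> is tested by scalar bilinear forms only (\<^const>\<open>teq2\<close>); composing
  with separating functionals extends the test to bilinear maps into any vector space.\<close>

lemma teq2_sum_eq:
  fixes s :: "'k::field \<Rightarrow> 'h::ab_group_add \<Rightarrow> 'h" and sV :: "'k \<Rightarrow> 'v::ab_group_add \<Rightarrow> 'v"
  assumes "vector_space s" "vector_space sV" and "teq2 s xs ys" and F: "bilin_map s sV F"
  shows "(\<Sum>(a,b)\<leftarrow>xs. F a b) = (\<Sum>(a,b)\<leftarrow>ys. F a b)"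
proof (rule vector_eq_if_functionals_eq[OF \<open>vector_space sV\<close>])
  fix \<phi> :: "'v \<Rightarrow> 'k"
  assume \<phi>: "lin_map sV (*) \<phi>"
  have "bilin s (\<lambda>a b. \<phi> (F a b))"
    using F \<phi> \<open>vector_space s\<close> by (auto simp: bilin_iff_bilin_map bilin_map_def intro: lin_map_compose)
  with \<open>teq2 s xs ys\<close> have "(\<Sum>(a,b)\<leftarrow>xs. \<phi> (F a b)) = (\<Sum>(a,b)\<leftarrow>ys. \<phi> (F a b))"
    by (simp add: teq2_def)
  then show "\<phi> (\<Sum>(a,b)\<leftarrow>xs. F a b) = \<phi> (\<Sum>(a,b)\<leftarrow>ys. F a b)"
    by (simp add: lin_map_sum_list[OF \<phi>] split_def)
qed

lemma sum_list_concat_map: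
  "(\<Sum>x\<leftarrow>concat (map g xs). f x) = (\<Sum>y\<leftarrow>xs. \<Sum>x\<leftarrow>g y. f x)"
  by (induction xs) auto

lemma sum_list_sum_list_swap:
  "(\<Sum>x\<leftarrow>xs. \<Sum>y\<leftarrow>ys. f x y) = (\<Sum>y\<leftarrow>ys. \<Sum>x\<leftarrow>xs. f x y :: 'a::comm_monoid_add)"
  by (induction xs) (auto simp: sum_list_addf)

locale cocomm_hopf_algebra =
  fixes sc :: "'k::field \<Rightarrow> 'h::ring_1 \<Rightarrow> 'h"
    and cm :: "'h \<Rightarrow> ('h \<times> 'h) list"
    and eps :: "'h \<Rightarrow> 'k"
    and ant :: "'h \<Rightarrow> 'h"
  assumes cocomm_hopf: "cocomm_hopf sc cm eps ant"
begin

text \<open>\<open>sweedler F x\<close> is \<open>F x\<^sub>1 x\<^sub>2\<close> in Sweedler notation. Since \<open>cm x\<close> is just one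
  representation of \<open>\<Delta> x\<close>, the laws of the coalgebra hold for it only when \<open>F\<close> is bilinear.\<close>

definition sweedler :: "('h \<Rightarrow> 'h \<Rightarrow> 'v::ab_group_add) \<Rightarrow> 'h \<Rightarrow> 'v" where
  "sweedler F x = (\<Sum>(a,b)\<leftarrow>cm x. F a b)"

lemma vector_space: "vector_space sc"
  using cocomm_hopf unfolding cocomm_hopf_def by blast

lemma scale_mult_left: "sc c (x * y) = sc c x * y"
  using cocomm_hopf unfolding cocomm_hopf_def by blast

lemma scale_mult_right: "sc c (x * y) = x * sc c y"
  using cocomm_hopf unfolding cocomm_hopf_def by blast

lemma mult_scale_one: "x * sc c 1 = sc c x"
  by (metis mult.right_neutral scale_mult_right)

lemma scale_one_mult: "sc c 1 * x = sc c x"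
  by (metis mult_1 scale_mult_left)

lemma lin_map_eps: "lin_map sc (*) eps"
  using cocomm_hopf vector_space_field by (simp add: cocomm_hopf_def linear_iff_lin_map)

lemma lin_map_ant: "lin_map sc sc ant"
  using cocomm_hopf by (simp add: cocomm_hopf_def linear_iff_lin_map)

lemma eps_mult: "eps (x * y) = eps x * eps y"
  using cocomm_hopf unfolding cocomm_hopf_def by blast

lemma eps_one: "eps 1 = 1"
  using cocomm_hopf unfolding cocomm_hopf_def by blast

lemma counit_left: "sweedler (\<lambda>a b. sc (eps a) b) x = x"
  using cocomm_hopf by (simp add: cocomm_hopf_def sweedler_def)

lemma counit_right: "sweedler (\<lambda>a b. sc (eps b) a) x = x"
  using cocomm_hopf by (simp add: cocomm_hopf_def sweedler_def)

lemma antipode_left: "sweedler (\<lambda>a b. ant a * b) x = sc (eps x) 1"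
  using cocomm_hopf by (simp add: cocomm_hopf_def sweedler_def)

lemma antipode_right: "sweedler (\<lambda>a b. a * ant b) x = sc (eps x) 1"
  using cocomm_hopf by (simp add: cocomm_hopf_def sweedler_def)

lemma lin_map_mult_left: "lin_map sc sc (\<lambda>x. c * x)"
  by (simp add: lin_map_def distrib_left scale_mult_right)

lemma lin_map_mult_right: "lin_map sc sc (\<lambda>x. x * c)"
  by (simp add: lin_map_def distrib_right scale_mult_left)

lemma lin_map_eps_scale: "vector_space sV \<Longrightarrow> lin_map sc sV (\<lambda>p. sV (eps p) w)"
  using lin_map_eps by (simp add: lin_map_def vector_space.vector_space_assms(2,3))

lemma sweedler_cong: "(\<And>a b. F a b = G a b) \<Longrightarrow> sweedler F x = sweedler G x"
  by (metis ext)

lemma lin_map_sweedler_apply: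
  "lin_map s1 s2 g \<Longrightarrow> g (sweedler F x) = sweedler (\<lambda>a b. g (F a b)) x"
  unfolding sweedler_def by (simp add: lin_map_sum_list split_def)

lemma sweedler_exchange:
  "sweedler (\<lambda>a b. sweedler (\<lambda>c d. G a b c d) y) x = sweedler (\<lambda>c d. sweedler (\<lambda>a b. G a b c d) x) y"
  unfolding sweedler_def split_def by (rule sum_list_sum_list_swap)

lemma sweedler_add_scale:
  assumes "vector_space sV" and F: "bilin_map sc sV F"
  shows "sweedler F (sc c x + y) = sV c (sweedler F x) + sweedler F y"
proof -
  have "teq2 sc (cm (sc c x + y)) (map (\<lambda>(a,b). (sc c a, b)) (cm x) @ cm y)"
    using cocomm_hopf by (simp add: cocomm_hopf_def)
  from teq2_sum_eq[OF vector_space \<open>vector_space sV\<close> this F]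
  have "sweedler F (sc c x + y) = (\<Sum>(a,b)\<leftarrow>cm x. sV c (F a b)) + sweedler F y"
    using F by (simp add: sweedler_def bilin_map_def lin_map_def o_def split_def)
  also have "(\<Sum>(a,b)\<leftarrow>cm x. sV c (F a b)) = sV c (sweedler F x)"
    using lin_map_sweedler_apply[OF lin_map_scale_right[OF \<open>vector_space sV\<close> lin_map_id], of c F x]
    by (simp add: sweedler_def)
  finally show ?thesis .
qed

lemma lin_map_sweedler:
  assumes "vector_space sV" and "bilin_map sc sV F"
  shows "lin_map sc sV (sweedler F)"
proof -
  note add_scale = sweedler_add_scale[OF assms]
  have add: "sweedler F (x + y) = sweedler F x + sweedler F y" for x y
    using add_scale[of 1 x y] assms(1) vector_space
    by (simp add: vector_space.vector_space_assms(4))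
  then have "sweedler F 0 = 0"
    by (metis add_cancel_right_right add_0)
  with add add_scale[of _ _ 0] show ?thesis
    by (simp add: lin_map_def)
qed

lemma lin_map_sweedler_param:
  "vector_space sV \<Longrightarrow> (\<And>a b. lin_map sc sV (\<lambda>v. G v a b)) \<Longrightarrow> lin_map sc sV (\<lambda>v. sweedler (G v) x)"
  unfolding sweedler_def by (rule lin_map_sum_list_param)

lemma lin_map_sweedler_compose:
  "vector_space sV \<Longrightarrow> bilin_map sc sV F \<Longrightarrow> lin_map sc sc f \<Longrightarrow> lin_map sc sV (\<lambda>x. sweedler F (f x))"
  using lin_map_compose lin_map_sweedler by blast

lemma sweedler_mult:
  assumes "vector_space sV" and "bilin_map sc sV F"
  shows "sweedler F (x * y) = sweedler (\<lambda>a b. sweedler (\<lambda>c d. F (a * c) (b * d)) y) x"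
proof -
  have "teq2 sc (cm (x * y)) (concat (map (\<lambda>(a,b). map (\<lambda>(c,d). (a * c, b * d)) (cm y)) (cm x)))"
    using cocomm_hopf unfolding cocomm_hopf_def by blast
  from teq2_sum_eq[OF vector_space assms(1) this assms(2)] show ?thesis
    by (simp add: sweedler_def sum_list_concat_map split_def o_def)
qed

lemma sweedler_one:
  assumes "vector_space sV" and "bilin_map sc sV F"
  shows "sweedler F 1 = F 1 1"
proof -
  have "teq2 sc (cm 1) [(1,1)]"
    using cocomm_hopf unfolding cocomm_hopf_def by blast
  from teq2_sum_eq[OF vector_space assms(1) this assms(2)] show ?thesis
    by (simp add: sweedler_def)
qed

lemma sweedler_flip:
  assumes "vector_space sV" and "bilin_map sc sV F"
  shows "sweedler F x = sweedler (\<lambda>a b. F b a) x"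
proof -
  have "teq2 sc (cm x) (map (\<lambda>(a,b). (b,a)) (cm x))"
    using cocomm_hopf unfolding cocomm_hopf_def by blast
  from teq2_sum_eq[OF vector_space assms(1) this assms(2)] show ?thesis
    by (simp add: sweedler_def split_def o_def)
qed

lemma sweedler_coassoc:
  fixes sV :: "'k \<Rightarrow> 'v::ab_group_add \<Rightarrow> 'v"
  assumes "vector_space sV" and \<tau>: "trilin_map sc sV \<tau>"
  shows "sweedler (\<lambda>a b. sweedler (\<lambda>c d. \<tau> c d b) a) x = sweedler (\<lambda>a b. sweedler (\<lambda>c d. \<tau> a c d) b) x"
proof (rule vector_eq_if_functionals_eq[OF assms(1)])
  fix \<phi> :: "'v \<Rightarrow> 'k"
  assume \<phi>: "lin_map sV (*) \<phi>"
  have "trilin sc (\<lambda>a b c. \<phi> (\<tau> a b c))"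
    using trilin_map_compose[OF \<tau> \<phi>] vector_space by (simp add: trilin_iff_trilin_map)
  then have "(\<Sum>(a,b)\<leftarrow>cm x. \<Sum>(c,d)\<leftarrow>cm a. \<phi> (\<tau> c d b)) = (\<Sum>(a,b)\<leftarrow>cm x. \<Sum>(c,d)\<leftarrow>cm b. \<phi> (\<tau> a c d))"
    using cocomm_hopf unfolding cocomm_hopf_def by blast
  then show "\<phi> (sweedler (\<lambda>a b. sweedler (\<lambda>c d. \<tau> c d b) a) x) = \<phi> (sweedler (\<lambda>a b. sweedler (\<lambda>c d. \<tau> a c d) b) x)"
    by (simp add: sweedler_def lin_map_sum_list[OF \<phi>] split_def o_def)
qed

lemma sweedler_counit:
  assumes "lin_map sc sV g"
  shows sweedler_counit_left: "sweedler (\<lambda>a b. sV (eps a) (g b)) x = g x"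
    and sweedler_counit_right: "sweedler (\<lambda>a b. sV (eps b) (g a)) x = g x"
proof -
  show "sweedler (\<lambda>a b. sV (eps a) (g b)) x = g x"
    using lin_map_sweedler_apply[OF assms, of "\<lambda>a b. sc (eps a) b" x]
    by (simp add: counit_left lin_map_scale[OF assms])
  show "sweedler (\<lambda>a b. sV (eps b) (g a)) x = g x"
    using lin_map_sweedler_apply[OF assms, of "\<lambda>a b. sc (eps b) a" x]
    by (simp add: counit_right lin_map_scale[OF assms])
qed

end

context cocomm_hopf_algebra
begin

lemma lin_map_ant_compose: "lin_map sc sc f \<Longrightarrow> lin_map sc sc (\<lambda>x. ant (f x))"
  using lin_map_compose[OF _ lin_map_ant] .

lemma lin_map_mult_right_compose: "lin_map sc sc f \<Longrightarrow> lin_map sc sc (\<lambda>x. f x * c)"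
  using lin_map_compose[OF _ lin_map_mult_right] .

lemma lin_map_mult_left_compose: "lin_map sc sc f \<Longrightarrow> lin_map sc sc (\<lambda>x. c * f x)"
  using lin_map_compose[OF _ lin_map_mult_left] .

lemmas lin_map_intros = bilin_mapI lin_map_id lin_map_mult_left lin_map_mult_right
  lin_map_ant_compose lin_map_mult_left_compose lin_map_mult_right_compose
  lin_map_scale_right[OF vector_space] lin_map_sweedler_compose[OF vector_space]
  lin_map_sweedler_param[OF vector_space]

lemma ant_one: "ant 1 = 1"
proof -
  have "bilin_map sc sc (\<lambda>a b. ant a * b)"
    by (intro lin_map_intros)
  from sweedler_one[OF vector_space this] antipode_left[of 1] show ?thesis
    by (simp add: eps_one vector_space.vector_space_assms(4)[OF vector_space])
qed

text \<open>Convolution in \<open>Hom(H \<otimes> H, H)\<close>, bilinear maps standing for linear maps on \<open>H \<otimes> H\<close>.\<close>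

definition bilin_conv :: "('h \<Rightarrow> 'h \<Rightarrow> 'h) \<Rightarrow> ('h \<Rightarrow> 'h \<Rightarrow> 'h) \<Rightarrow> 'h \<Rightarrow> 'h \<Rightarrow> 'h" where
  "bilin_conv F G x y = sweedler (\<lambda>a b. sweedler (\<lambda>c d. F a c * G b d) y) x"

definition bilin_unit :: "'h \<Rightarrow> 'h \<Rightarrow> 'h" where
  "bilin_unit x y = sc (eps x * eps y) 1"

lemma bilin_conv_unit_right:
  assumes "bilin_map sc sc L"
  shows "bilin_conv L bilin_unit x y = L x y"
proof -
  have L1: "lin_map sc sc (\<lambda>a. L a c)" and L2: "lin_map sc sc (L a)" for a c
    using assms by (auto simp: bilin_map_def)
  have "sweedler (\<lambda>c d. L a c * bilin_unit b d) y = sc (eps b) (L a y)" for a b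
  proof -
    have "sweedler (\<lambda>c d. L a c * bilin_unit b d) y = sweedler (\<lambda>c d. sc (eps d) (sc (eps b) (L a c))) y"
      by (simp add: bilin_unit_def mult_scale_one vector_space.vector_space_assms(3)[OF vector_space] mult.commute)
    also have "\<dots> = sc (eps b) (L a y)"
      by (rule sweedler_counit_right) (intro lin_map_intros L2)
    finally show ?thesis .
  qed
  then show ?thesis
    unfolding bilin_conv_def by (simp add: sweedler_counit_right[OF L1])
qed

lemma bilin_conv_unit_left:
  assumes "bilin_map sc sc L"
  shows "bilin_conv bilin_unit L x y = L x y"
proof -
  have L1: "lin_map sc sc (\<lambda>b. L b d)" and L2: "lin_map sc sc (L b)" for b d
    using assms by (auto simp: bilin_map_def)
  have "sweedler (\<lambda>c d. bilin_unit a c * L b d) y = sc (eps a) (L b y)" for a b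
  proof -
    have "sweedler (\<lambda>c d. bilin_unit a c * L b d) y = sweedler (\<lambda>c d. sc (eps c) (sc (eps a) (L b d))) y"
      by (simp add: bilin_unit_def scale_one_mult vector_space.vector_space_assms(3)[OF vector_space] mult.commute)
    also have "\<dots> = sc (eps a) (L b y)"
      by (rule sweedler_counit_left) (intro lin_map_intros L2)
    finally show ?thesis .
  qed
  then show ?thesis
    unfolding bilin_conv_def by (simp add: sweedler_counit_left[OF L1])
qed

lemma bilin_conv_ant_mult_mult: "bilin_conv (\<lambda>u v. ant (u * v)) (*) x y = bilin_unit x y"
proof -
  have "bilin_map sc sc (\<lambda>a b. ant a * b)"
    by (intro lin_map_intros)
  from sweedler_mult[OF vector_space this, of x y] antipode_left[of "x * y"] show ?thesis
    by (simp add: bilin_conv_def bilin_unit_def eps_mult)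
qed

lemma bilin_conv_mult_ant_flip: "bilin_conv (*) (\<lambda>u v. ant v * ant u) x y = bilin_unit x y"
proof -
  have inner: "sweedler (\<lambda>c d. a * c * (ant d * ant b)) y = sc (eps y) (a * ant b)" for a b
  proof -
    have "sweedler (\<lambda>c d. a * c * (ant d * ant b)) y = a * sweedler (\<lambda>c d. c * ant d) y * ant b"
      by (subst lin_map_sweedler_apply[of sc sc "\<lambda>z. a * z * ant b"])
        (auto simp: mult.assoc intro!: lin_map_intros)
    then show ?thesis
      by (simp add: antipode_right mult_scale_one scale_mult_left scale_mult_right)
  qed
  have "bilin_conv (*) (\<lambda>u v. ant v * ant u) x y = sweedler (\<lambda>a b. sc (eps y) (a * ant b)) x"
    unfolding bilin_conv_def inner ..
  also have "\<dots> = sc (eps y) (sweedler (\<lambda>a b. a * ant b) x)"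
    by (subst lin_map_sweedler_apply[of sc sc "sc (eps y)"]) (auto intro: lin_map_intros)
  also have "\<dots> = bilin_unit x y"
    by (simp add: bilin_unit_def antipode_right vector_space.vector_space_assms(3)[OF vector_space] mult.commute)
  finally show ?thesis .
qed

lemma bilin_conv_assoc:
  assumes L: "bilin_map sc sc L" and M: "bilin_map sc sc M" and P: "bilin_map sc sc P"
  shows "bilin_conv (bilin_conv L M) P x y = bilin_conv L (bilin_conv M P) x y"
proof -
  have lin: "lin_map sc sc (\<lambda>a. L a c)" "lin_map sc sc (L a)"
    "lin_map sc sc (\<lambda>a. M a c)" "lin_map sc sc (M a)"
    "lin_map sc sc (\<lambda>a. P a c)" "lin_map sc sc (P a)" for a c
    using L M P by (auto simp: bilin_map_def)
  note intros = conjI allI lin_map_intros lin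
  define \<Phi> where "\<Phi> a1 a2 b c1 c2 d = L a1 c1 * M a2 c2 * P b d" for a1 a2 b c1 c2 d
  have left: "bilin_conv L M a c * P b d = sweedler (\<lambda>a1 a2. sweedler (\<lambda>c1 c2. \<Phi> a1 a2 b c1 c2 d) c) a"
    for a b c d
    unfolding bilin_conv_def \<Phi>_def
    by (subst lin_map_sweedler_apply[of sc sc "\<lambda>z. z * P b d"], (intro intros), rule sweedler_cong,
        subst lin_map_sweedler_apply[of sc sc "\<lambda>z. z * P b d"], (intro intros), rule refl)
  have right: "L a c * bilin_conv M P b d = sweedler (\<lambda>b1 b2. sweedler (\<lambda>d1 d2. \<Phi> a b1 b2 c d1 d2) d) b"
    for a b c d
    unfolding bilin_conv_def \<Phi>_def
    by (subst lin_map_sweedler_apply[of sc sc "\<lambda>z. L a c * z"], (intro intros), rule sweedler_cong,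
        subst lin_map_sweedler_apply[of sc sc "\<lambda>z. L a c * z"], (intro intros), simp add: mult.assoc)
  have "bilin_conv (bilin_conv L M) P x y
      = sweedler (\<lambda>a b. sweedler (\<lambda>c d. sweedler (\<lambda>a1 a2. sweedler (\<lambda>c1 c2. \<Phi> a1 a2 b c1 c2 d) c) a) y) x"
    unfolding bilin_conv_def[of "bilin_conv L M"] left ..
  also have "\<dots> = sweedler (\<lambda>a b. sweedler (\<lambda>a1 a2. sweedler (\<lambda>c d. sweedler (\<lambda>c1 c2. \<Phi> a1 a2 b c1 c2 d) c) y) a) x"
    by (rule sweedler_cong, rule sweedler_exchange)
  also have "\<dots> = sweedler (\<lambda>a b. sweedler (\<lambda>b1 b2. sweedler (\<lambda>c d. sweedler (\<lambda>c1 c2. \<Phi> a b1 b2 c1 c2 d) c) y) b) x"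
    by (rule sweedler_coassoc[OF vector_space, where \<tau> = "\<lambda>a1 a2 b. sweedler (\<lambda>c d. sweedler (\<lambda>c1 c2. \<Phi> a1 a2 b c1 c2 d) c) y"])
      (unfold trilin_map_def \<Phi>_def, intro intros)
  also have "\<dots> = sweedler (\<lambda>a b. sweedler (\<lambda>b1 b2. sweedler (\<lambda>c d. sweedler (\<lambda>d1 d2. \<Phi> a b1 b2 c d1 d2) d) y) b) x"
    by (rule sweedler_cong, rule sweedler_cong, rule sweedler_coassoc[OF vector_space, where \<tau> = "\<lambda>c1 c2 d. \<Phi> _ _ _ c1 c2 d"])
      (unfold trilin_map_def \<Phi>_def, intro intros)
  also have "\<dots> = sweedler (\<lambda>a b. sweedler (\<lambda>c d. sweedler (\<lambda>b1 b2. sweedler (\<lambda>d1 d2. \<Phi> a b1 b2 c d1 d2) d) b) y) x"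
    by (rule sweedler_cong, rule sweedler_exchange[symmetric])
  also have "\<dots> = bilin_conv L (bilin_conv M P) x y"
    unfolding bilin_conv_def[of L] right ..
  finally show ?thesis .
qed

text \<open>Both sides are convolution inverses of the multiplication \<open>H \<otimes> H \<rightarrow> H\<close>.\<close>

lemma ant_mult: "ant (x * y) = ant y * ant x"
proof -
  have unit_mult_ant: "bilin_conv (*) (\<lambda>u v. ant v * ant u) = bilin_unit"
    by (intro ext) (rule bilin_conv_mult_ant_flip)
  have ant_mult_unit: "bilin_conv (\<lambda>u v. ant (u * v)) (*) = bilin_unit"
    by (intro ext) (rule bilin_conv_ant_mult_mult)
  have "ant (x * y) = bilin_conv (\<lambda>u v. ant (u * v)) (bilin_conv (*) (\<lambda>u v. ant v * ant u)) x y"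
    unfolding unit_mult_ant by (rule bilin_conv_unit_right[symmetric]) (intro lin_map_intros)
  also have "\<dots> = bilin_conv (bilin_conv (\<lambda>u v. ant (u * v)) (*)) (\<lambda>u v. ant v * ant u) x y"
    by (rule bilin_conv_assoc[symmetric]) (intro lin_map_intros)+
  also have "\<dots> = ant y * ant x"
    unfolding ant_mult_unit by (rule bilin_conv_unit_left) (intro lin_map_intros)
  finally show ?thesis .
qed

end

context cocomm_hopf_algebra
begin

text \<open>By coassociativity both sides are \<open>\<Psi>\<close> applied to \<open>x\<^sub>1, x\<^sub>2, x\<^sub>3, x\<^sub>4\<close>, the right one with
  the middle arguments exchanged; cocommutativity makes them equal.\<close>

lemma sweedler_middle_swap:
  fixes sV :: "'k \<Rightarrow> 'v::ab_group_add \<Rightarrow> 'v"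
  assumes vV: "vector_space sV"
    and lin: "\<And>b c d. lin_map sc sV (\<lambda>a. \<Psi> a b c d)" "\<And>a c d. lin_map sc sV (\<lambda>b. \<Psi> a b c d)"
      "\<And>a b d. lin_map sc sV (\<lambda>c. \<Psi> a b c d)" "\<And>a b c. lin_map sc sV (\<lambda>d. \<Psi> a b c d)"
  shows "sweedler (\<lambda>a b. sweedler (\<lambda>a1 a2. sweedler (\<lambda>b1 b2. \<Psi> a1 a2 b1 b2) b) a) x
       = sweedler (\<lambda>a b. sweedler (\<lambda>a1 a2. sweedler (\<lambda>b1 b2. \<Psi> a1 b1 a2 b2) b) a) x"
proof -
  note intros = conjI allI lin_map_id bilin_mapI lin
    lin_map_sweedler_param[OF vV] lin_map_sweedler_compose[OF vV]
  have "sweedler (\<lambda>a b. sweedler (\<lambda>a1 a2. sweedler (\<lambda>b1 b2. \<Psi> a1 a2 b1 b2) b) a) x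
      = sweedler (\<lambda>a b. sweedler (\<lambda>c d. sweedler (\<lambda>d1 d2. \<Psi> a c d1 d2) d) b) x"
    by (rule sweedler_coassoc[OF vV, where \<tau> = "\<lambda>a1 a2 b. sweedler (\<lambda>b1 b2. \<Psi> a1 a2 b1 b2) b"])
      (unfold trilin_map_def, intro intros)
  also have "\<dots> = sweedler (\<lambda>a b. sweedler (\<lambda>c d. sweedler (\<lambda>c1 c2. \<Psi> a c1 c2 d) c) b) x"
    by (rule sweedler_cong, rule sweedler_coassoc[OF vV, where \<tau> = "\<lambda>c d1 d2. \<Psi> _ c d1 d2", symmetric])
      (unfold trilin_map_def, intro intros)
  also have "\<dots> = sweedler (\<lambda>a b. sweedler (\<lambda>c d. sweedler (\<lambda>c1 c2. \<Psi> a c2 c1 d) c) b) x"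
    by (intro sweedler_cong sweedler_flip[OF vV]) (intro intros)
  also have "\<dots> = sweedler (\<lambda>a b. sweedler (\<lambda>c d. sweedler (\<lambda>d1 d2. \<Psi> a d1 c d2) d) b) x"
    by (rule sweedler_cong, rule sweedler_coassoc[OF vV, where \<tau> = "\<lambda>c1 c2 d. \<Psi> _ c2 c1 d"])
      (unfold trilin_map_def, intro intros)
  also have "\<dots> = sweedler (\<lambda>a b. sweedler (\<lambda>a1 a2. sweedler (\<lambda>b1 b2. \<Psi> a1 b1 a2 b2) b) a) x"
    by (rule sweedler_coassoc[OF vV, where \<tau> = "\<lambda>a c d. sweedler (\<lambda>d1 d2. \<Psi> a d1 c d2) d", symmetric])
      (unfold trilin_map_def, intro intros)
  finally show ?thesis .
qed

lemma sweedler_antipode_right_collapse: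
  fixes sV :: "'k \<Rightarrow> 'v::ab_group_add \<Rightarrow> 'v"
  assumes vV: "vector_space sV" and F: "bilin_map sc sV F"
  shows "sweedler (\<lambda>p q. sweedler (\<lambda>p1 p2. sweedler (\<lambda>q1 q2. F (u * (p1 * ant q1)) (v * (p2 * ant q2))) q) p) b
    = sV (eps b) (F u v)"
proof -
  note intros = lin_map_intros lin_map_scale_right[OF vV]
    bilin_map_compose_left[OF F] bilin_map_compose_right[OF F]
  have right: "sweedler (\<lambda>q1 q2. F X (v * (q1 * ant q2))) q = sV (eps q) (F X v)" for X q
    using lin_map_sweedler_apply[of sc sV "\<lambda>z. F X (v * z)" "\<lambda>q1 q2. q1 * ant q2" q]
    by (simp add: intros antipode_right mult_scale_one lin_map_scale[OF bilin_map_compose_right[OF F lin_map_id]])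
  have left: "sweedler (\<lambda>p1 p2. sV (eps q) (F (u * (p1 * ant p2)) v)) p = sV (eps q) (sV (eps p) (F u v))" for p q
    using lin_map_sweedler_apply[of sc sV "\<lambda>z. sV (eps q) (F (u * z) v)" "\<lambda>p1 p2. p1 * ant p2" p]
    by (simp add: intros antipode_right mult_scale_one lin_map_scale[OF bilin_map_compose_left[OF F lin_map_id]])
  have "sweedler (\<lambda>p q. sweedler (\<lambda>p1 p2. sweedler (\<lambda>q1 q2. F (u * (p1 * ant q1)) (v * (p2 * ant q2))) q) p) b
    = sweedler (\<lambda>p q. sweedler (\<lambda>p1 p2. sweedler (\<lambda>q1 q2. F (u * (p1 * ant p2)) (v * (q1 * ant q2))) q) p) b"
    by (rule sweedler_middle_swap[OF vV]) (intro intros)+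
  also have "\<dots> = sweedler (\<lambda>p q. sV (eps q) (sV (eps p) (F u v))) b"
    by (simp add: right left)
  also have "\<dots> = sV (eps b) (F u v)"
    by (rule sweedler_counit_right[OF lin_map_eps_scale[OF vV]])
  finally show ?thesis .
qed

lemma sweedler_coproduct_antipode_mult:
  fixes sV :: "'k \<Rightarrow> 'v::ab_group_add \<Rightarrow> 'v"
  assumes vV: "vector_space sV" and F: "bilin_map sc sV F"
  shows "sweedler (\<lambda>a1 a2. sweedler (\<lambda>u v. sweedler (\<lambda>p1 p2. F (u * p1) (v * p2)) a2) (ant a1)) a
    = sV (eps a) (F 1 1)"
proof -
  have "sweedler (\<lambda>a1 a2. sweedler (\<lambda>u v. sweedler (\<lambda>p1 p2. F (u * p1) (v * p2)) a2) (ant a1)) a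
      = sweedler (\<lambda>a1 a2. sweedler F (ant a1 * a2)) a"
    by (simp add: sweedler_mult[OF vV F])
  also have "\<dots> = sweedler F (sweedler (\<lambda>a1 a2. ant a1 * a2) a)"
    by (rule lin_map_sweedler_apply[symmetric]) (rule lin_map_sweedler[OF vV F])
  also have "\<dots> = sV (eps a) (F 1 1)"
    using lin_map_sweedler[OF vV F] by (simp add: antipode_left lin_map_scale sweedler_one[OF vV F])
  finally show ?thesis .
qed

lemma sweedler_antipode_left_collapse:
  fixes sV :: "'k \<Rightarrow> 'v::ab_group_add \<Rightarrow> 'v"
  assumes vV: "vector_space sV" and F: "bilin_map sc sV F"
  shows "sweedler (\<lambda>a1 a2. sweedler (\<lambda>u v. sweedler (\<lambda>p1 p2. sweedler (\<lambda>q1 q2.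
      F (u * (p1 * ant q1)) (v * (p2 * ant q2))) b) a2) (ant a1)) a
    = sV (eps a) (sweedler (\<lambda>q1 q2. F (ant q1) (ant q2)) b)"
proof -
  note intros = lin_map_intros bilin_map_compose_left[OF F] bilin_map_compose_right[OF F]
  have "sweedler (\<lambda>a1 a2. sweedler (\<lambda>u v. sweedler (\<lambda>p1 p2. sweedler (\<lambda>q1 q2.
      F (u * (p1 * ant q1)) (v * (p2 * ant q2))) b) a2) (ant a1)) a
    = sweedler (\<lambda>a1 a2. sweedler (\<lambda>u v. sweedler (\<lambda>q1 q2. sweedler (\<lambda>p1 p2.
        F (u * (p1 * ant q1)) (v * (p2 * ant q2))) a2) b) (ant a1)) a"
    by (subst sweedler_exchange) (rule refl)
  also have "\<dots> = sweedler (\<lambda>a1 a2. sweedler (\<lambda>q1 q2. sweedler (\<lambda>u v. sweedler (\<lambda>p1 p2.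
        F (u * (p1 * ant q1)) (v * (p2 * ant q2))) a2) (ant a1)) b) a"
    by (subst sweedler_exchange) (rule refl)
  also have "\<dots> = sweedler (\<lambda>q1 q2. sweedler (\<lambda>a1 a2. sweedler (\<lambda>u v. sweedler (\<lambda>p1 p2.
        F (u * (p1 * ant q1)) (v * (p2 * ant q2))) a2) (ant a1)) a) b"
    by (rule sweedler_exchange)
  also have "\<dots> = sweedler (\<lambda>q1 q2. sV (eps a) (F (ant q1) (ant q2))) b"
    using sweedler_coproduct_antipode_mult[OF vV, of "\<lambda>r s. F (r * ant _) (s * ant _)"]
    by (simp add: mult.assoc intros)
  also have "\<dots> = sV (eps a) (sweedler (\<lambda>q1 q2. F (ant q1) (ant q2)) b)"
    by (rule lin_map_sweedler_apply[symmetric]) (rule lin_map_scale_right[OF vV lin_map_id])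
  finally show ?thesis .
qed

text \<open>Evaluate \<open>\<Delta>(S x\<^sub>1) \<Delta>(x\<^sub>2) (S x\<^sub>3 \<otimes> S x\<^sub>4)\<close>
  once collapsing \<open>\<Delta>(x\<^sub>2) (S x\<^sub>3 \<otimes> S x\<^sub>4)\<close> and once collapsing \<open>\<Delta>(S x\<^sub>1 x\<^sub>2)\<close>.\<close>

lemma sweedler_ant:
  fixes sV :: "'k \<Rightarrow> 'v::ab_group_add \<Rightarrow> 'v"
  assumes vV: "vector_space sV" and F: "bilin_map sc sV F"
  shows "sweedler F (ant x) = sweedler (\<lambda>a b. F (ant a) (ant b)) x"
proof -
  note intros = conjI allI lin_map_intros lin_map_scale_right[OF vV]
    bilin_map_compose_left[OF F] bilin_map_compose_right[OF F]
    lin_map_sweedler_param[OF vV] lin_map_sweedler_compose[OF vV]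
  define G where "G u v p q = sweedler (\<lambda>p1 p2. sweedler (\<lambda>q1 q2. F (u * (p1 * ant q1)) (v * (p2 * ant q2))) q) p"
    for u v p q
  define E where "E = sweedler (\<lambda>a b. sweedler (\<lambda>u v. sweedler (G u v) b) (ant a)) x"
  have "E = sweedler (\<lambda>a b. sV (eps b) (sweedler F (ant a))) x"
    unfolding E_def G_def sweedler_antipode_right_collapse[OF vV F]
    by (simp add: lin_map_sweedler_apply[OF lin_map_scale_right[OF vV lin_map_id]])
  then have E_ant: "E = sweedler F (ant x)"
    using sweedler_counit_right[of sV "\<lambda>a. sweedler F (ant a)"] by (simp add: intros F vV)
  have "E = sweedler (\<lambda>a b. sweedler (\<lambda>p q. sweedler (\<lambda>u v. G u v p q) (ant a)) b) x"
    unfolding E_def by (subst sweedler_exchange) (rule refl)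
  also have "\<dots> = sweedler (\<lambda>a b. sweedler (\<lambda>a1 a2. sweedler (\<lambda>u v. G u v a2 b) (ant a1)) a) x"
    by (rule sweedler_coassoc[OF vV, where \<tau> = "\<lambda>a p q. sweedler (\<lambda>u v. G u v p q) (ant a)", symmetric])
      (unfold trilin_map_def G_def, intro intros)
  also have "\<dots> = sweedler (\<lambda>a b. F (ant a) (ant b)) x"
    unfolding G_def sweedler_antipode_left_collapse[OF vV F]
    by (rule sweedler_counit_left) (intro intros)
  finally show ?thesis
    using E_ant by simp
qed

end

locale hopf_characters = cocomm_hopf_algebra sc cm eps ant
  for sc :: "'k::field \<Rightarrow> 'h::ring_1 \<Rightarrow> 'h"
    and cm :: "'h \<Rightarrow> ('h \<times> 'h) list"
    and eps :: "'h \<Rightarrow> 'k"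
    and ant :: "'h \<Rightarrow> 'h" +
  fixes scA :: "'k \<Rightarrow> 'a::comm_ring_1 \<Rightarrow> 'a"
  assumes comm_algebra: "comm_algebra scA"
begin

definition convolution :: "('h \<Rightarrow> 'a) \<Rightarrow> ('h \<Rightarrow> 'a) \<Rightarrow> 'h \<Rightarrow> 'a" where
  "convolution f g = sweedler (\<lambda>x y. f x * g y)"

definition conv_unit :: "'h \<Rightarrow> 'a" where
  "conv_unit a = scA (eps a) 1"

lemma vector_space_A: "vector_space scA"
  using comm_algebra by (simp add: comm_algebra_def)

lemma scaleA_mult_left: "scA c (x * y) = scA c x * y"
  using comm_algebra by (simp add: comm_algebra_def)

lemma scaleA_mult_right: "scA c (x * y) = x * scA c y"
  by (metis scaleA_mult_left mult.commute)

lemma lin_map_multA_left: "lin_map scA scA (\<lambda>z. k * z)"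
  by (simp add: lin_map_def distrib_left scaleA_mult_right)

lemma lin_map_multA_right: "lin_map scA scA (\<lambda>z. z * k)"
  by (simp add: lin_map_def distrib_right scaleA_mult_left)

lemma mem_charH_iff: "f \<in> charH sc scA \<longleftrightarrow> lin_map sc scA f \<and> (\<forall>x y. f (x * y) = f x * f y) \<and> f 1 = 1"
  using vector_space vector_space_A by (simp add: charH_def linear_iff_lin_map)

lemma bilin_map_mult_apply:
  "lin_map sc scA f \<Longrightarrow> lin_map sc scA g \<Longrightarrow> bilin_map sc scA (\<lambda>x y. f x * g y)"
  unfolding bilin_map_def
  by (auto intro: lin_map_compose[OF _ lin_map_multA_left] lin_map_compose[OF _ lin_map_multA_right])

lemma convolution_closed:
  assumes f: "f \<in> charH sc scA" and g: "g \<in> charH sc scA"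
  shows "convolution f g \<in> charH sc scA"
proof -
  have lin: "lin_map sc scA f" "lin_map sc scA g"
    and mult: "\<And>x y. f (x * y) = f x * f y" "\<And>x y. g (x * y) = g x * g y"
    and one: "f 1 = 1" "g 1 = 1"
    using f g by (auto simp: mem_charH_iff)
  note bilin = bilin_map_mult_apply[OF lin]
  have "convolution f g (x * y) = convolution f g x * convolution f g y" for x y
  proof -
    have "convolution f g (x * y) = sweedler (\<lambda>a b. sweedler (\<lambda>c d. (f a * g b) * (f c * g d)) y) x"
      unfolding convolution_def sweedler_mult[OF vector_space_A bilin] mult by (simp add: ac_simps)
    also have "\<dots> = sweedler (\<lambda>a b. (f a * g b) * convolution f g y) x"
      unfolding convolution_def by (simp add: lin_map_sweedler_apply[OF lin_map_multA_left, symmetric])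
    also have "\<dots> = convolution f g x * convolution f g y"
      unfolding convolution_def by (simp add: lin_map_sweedler_apply[OF lin_map_multA_right, symmetric])
    finally show ?thesis .
  qed
  moreover have "convolution f g 1 = 1"
    unfolding convolution_def sweedler_one[OF vector_space_A bilin] one by simp
  ultimately show ?thesis
    using lin_map_sweedler[OF vector_space_A bilin] by (simp add: mem_charH_iff convolution_def)
qed

lemma conv_unit_mem_charH: "conv_unit \<in> charH sc scA"
proof -
  have "lin_map sc scA conv_unit"
    unfolding conv_unit_def by (rule lin_map_eps_scale[OF vector_space_A])
  moreover have "conv_unit (x * y) = conv_unit x * conv_unit y" for x y
    unfolding conv_unit_def eps_mult
    by (metis mult_1 scaleA_mult_left vector_space.vector_space_assms(3)[OF vector_space_A])
  moreover have "conv_unit 1 = 1"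
    unfolding conv_unit_def eps_one by (simp add: vector_space.vector_space_assms(4)[OF vector_space_A])
  ultimately show ?thesis
    by (simp add: mem_charH_iff)
qed

lemma convolution_assoc:
  assumes f: "lin_map sc scA f" and g: "lin_map sc scA g" and h: "lin_map sc scA h"
  shows "convolution (convolution f g) h = convolution f (convolution g h)"
proof
  fix x
  have "convolution (convolution f g) h x = sweedler (\<lambda>a b. sweedler (\<lambda>c d. f c * g d * h b) a) x"
    unfolding convolution_def by (simp add: lin_map_sweedler_apply[OF lin_map_multA_right, symmetric])
  also have "\<dots> = sweedler (\<lambda>a b. sweedler (\<lambda>c d. f a * g c * h d) b) x"
    by (rule sweedler_coassoc[OF vector_space_A]) (unfold trilin_map_def,
        intro conjI allI lin_map_compose[OF _ lin_map_multA_right] lin_map_compose[OF _ lin_map_multA_left] f g h)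
  also have "\<dots> = convolution f (convolution g h) x"
    unfolding convolution_def by (simp add: lin_map_sweedler_apply[OF lin_map_multA_left, symmetric] mult.assoc)
  finally show "convolution (convolution f g) h x = convolution f (convolution g h) x" .
qed

lemma convolution_unit_left: "lin_map sc scA f \<Longrightarrow> convolution conv_unit f = f"
  unfolding convolution_def conv_unit_def
  by (rule ext, subst sweedler_counit_left[of scA f, symmetric]) (auto simp: scaleA_mult_left[symmetric])

lemma ant_compose_mem_charH: "f \<in> charH sc scA \<Longrightarrow> (\<lambda>x. f (ant x)) \<in> charH sc scA"
  by (auto simp: mem_charH_iff ant_mult ant_one mult.commute intro: lin_map_compose[OF lin_map_ant])

lemma convolution_ant_left:
  assumes "f \<in> charH sc scA"
  shows "convolution (\<lambda>x. f (ant x)) f = conv_unit"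
proof
  fix x
  have f: "lin_map sc scA f" "\<And>x y. f (x * y) = f x * f y" "f 1 = 1"
    using assms by (auto simp: mem_charH_iff)
  have "convolution (\<lambda>x. f (ant x)) f x = f (sweedler (\<lambda>a b. ant a * b) x)"
    unfolding convolution_def f(2)[symmetric] by (rule lin_map_sweedler_apply[OF f(1), symmetric])
  then show "convolution (\<lambda>x. f (ant x)) f x = conv_unit x"
    by (simp add: antipode_left lin_map_scale[OF f(1)] f(3) conv_unit_def)
qed

lemma CharH_grp_simps:
  "carrier (CharH_grp sc cm eps scA) = charH sc scA"
  "mult (CharH_grp sc cm eps scA) = convolution"
  "one (CharH_grp sc cm eps scA) = conv_unit"
  by (simp_all add: CharH_grp_def convolution_def sweedler_def conv_unit_def fun_eq_iff)

lemma group_CharH_grp: "group (CharH_grp sc cm eps scA)"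
proof (rule groupI, unfold CharH_grp_simps)
  show "convolution f g \<in> charH sc scA" if "f \<in> charH sc scA" "g \<in> charH sc scA" for f g
    using that by (rule convolution_closed)
  show "convolution (convolution f g) h = convolution f (convolution g h)"
    if "f \<in> charH sc scA" "g \<in> charH sc scA" "h \<in> charH sc scA" for f g h
    using that by (intro convolution_assoc) (auto simp: mem_charH_iff)
  show "convolution conv_unit f = f" if "f \<in> charH sc scA" for f
    using that by (intro convolution_unit_left) (auto simp: mem_charH_iff)
  show "\<exists>g\<in>charH sc scA. convolution g f = conv_unit" if "f \<in> charH sc scA" for f
    using that ant_compose_mem_charH convolution_ant_left by blast
qed (rule conv_unit_mem_charH)

end

context cocomm_hopf_algebra
begin

lemma lin_map_coalg_hom: "coalg_hom sc cm eps B \<Longrightarrow> lin_map sc sc B"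
  by (simp add: coalg_hom_def linear_iff_lin_map)

lemma sweedler_coalg_hom:
  assumes B: "coalg_hom sc cm eps B" and vV: "vector_space sV" and F: "bilin_map sc sV F"
  shows "sweedler F (B x) = sweedler (\<lambda>a b. F (B a) (B b)) x"
proof -
  have "teq2 sc (cm (B x)) (map (\<lambda>(a,b). (B a, B b)) (cm x))"
    using B by (simp add: coalg_hom_def)
  from teq2_sum_eq[OF vector_space vV this F] show ?thesis
    by (simp add: sweedler_def split_def o_def)
qed

lemma sweedler_mult_ant:
  fixes sV :: "'k \<Rightarrow> 'v::ab_group_add \<Rightarrow> 'v"
  assumes B1: "coalg_hom sc cm eps B1" and B2: "coalg_hom sc cm eps B2"
    and vV: "vector_space sV" and F: "bilin_map sc sV F"
  shows "sweedler F (B1 u * ant (B2 v))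
    = sweedler (\<lambda>p q. sweedler (\<lambda>r s. F (B1 p * ant (B2 r)) (B1 q * ant (B2 s))) v) u"
proof -
  note intros = lin_map_intros bilin_map_compose_left[OF F] bilin_map_compose_right[OF F]
    lin_map_sweedler_param[OF vV] lin_map_sweedler_compose[OF vV]
    lin_map_compose[OF _ lin_map_coalg_hom[OF B1]] lin_map_compose[OF _ lin_map_coalg_hom[OF B2]]
  have "sweedler F (B1 u * ant (B2 v))
      = sweedler (\<lambda>p q. sweedler (\<lambda>r s. F (p * r) (q * s)) (ant (B2 v))) (B1 u)"
    by (rule sweedler_mult[OF vV F])
  also have "\<dots> = sweedler (\<lambda>p q. sweedler (\<lambda>r s. F (B1 p * r) (B1 q * s)) (ant (B2 v))) u"
    by (rule sweedler_coalg_hom[OF B1 vV]) (intro intros)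
  also have "\<dots> = sweedler (\<lambda>p q. sweedler (\<lambda>r s. F (B1 p * ant r) (B1 q * ant s)) (B2 v)) u"
    by (intro sweedler_cong sweedler_ant[OF vV]) (intro intros)
  also have "\<dots> = sweedler (\<lambda>p q. sweedler (\<lambda>r s. F (B1 p * ant (B2 r)) (B1 q * ant (B2 s))) v) u"
    by (intro sweedler_cong sweedler_coalg_hom[OF B2 vV]) (intro intros)
  finally show ?thesis .
qed

lemma rb_sigma_eq_sweedler: "rb_sigma cm ant B1 B2 a = sweedler (\<lambda>x y. B1 x * ant (B2 y)) a"
  by (simp add: rb_sigma_def sweedler_def)

text \<open>Cocommutativity turns \<open>B\<^sub>1(b\<^sub>1) S(B\<^sub>2(b\<^sub>3)) \<otimes> B\<^sub>1(b\<^sub>2) S(B\<^sub>2(b\<^sub>4))\<close> into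
  \<open>\<sigma>(b\<^sub>1) \<otimes> \<sigma>(b\<^sub>2)\<close>.\<close>

lemma sweedler_rb_sigma:
  fixes sV :: "'k \<Rightarrow> 'v::ab_group_add \<Rightarrow> 'v"
  assumes B1: "coalg_hom sc cm eps B1" and B2: "coalg_hom sc cm eps B2"
    and vV: "vector_space sV" and F: "bilin_map sc sV F"
  shows "sweedler F (rb_sigma cm ant B1 B2 b)
    = sweedler (\<lambda>u v. F (rb_sigma cm ant B1 B2 u) (rb_sigma cm ant B1 B2 v)) b"
proof -
  note intros = lin_map_intros bilin_map_compose_left[OF F] bilin_map_compose_right[OF F]
    lin_map_sweedler_param[OF vV] lin_map_sweedler_compose[OF vV]
    lin_map_compose[OF _ lin_map_coalg_hom[OF B1]] lin_map_compose[OF _ lin_map_coalg_hom[OF B2]]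
  define \<Psi> where "\<Psi> p q r s = F (B1 p * ant (B2 r)) (B1 q * ant (B2 s))" for p q r s
  have "sweedler F (rb_sigma cm ant B1 B2 b) = sweedler (\<lambda>x y. sweedler F (B1 x * ant (B2 y))) b"
    unfolding rb_sigma_eq_sweedler by (rule lin_map_sweedler_apply[OF lin_map_sweedler[OF vV F]])
  also have "\<dots> = sweedler (\<lambda>x y. sweedler (\<lambda>p q. sweedler (\<lambda>r s. \<Psi> p q r s) y) x) b"
    by (simp add: sweedler_mult_ant[OF B1 B2 vV F] \<Psi>_def)
  also have "\<dots> = sweedler (\<lambda>x y. sweedler (\<lambda>p q. sweedler (\<lambda>r s. \<Psi> p r q s) y) x) b"
    by (rule sweedler_middle_swap[OF vV]) (unfold \<Psi>_def, (intro intros)+)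
  also have "\<dots> = sweedler (\<lambda>u v. F (rb_sigma cm ant B1 B2 u) (rb_sigma cm ant B1 B2 v)) b"
  proof (intro sweedler_cong)
    fix u v
    show "sweedler (\<lambda>p q. sweedler (\<lambda>r s. \<Psi> p r q s) v) u = F (rb_sigma cm ant B1 B2 u) (rb_sigma cm ant B1 B2 v)"
      unfolding rb_sigma_eq_sweedler \<Psi>_def
      by (subst lin_map_sweedler_apply[OF bilin_map_compose_left[OF F lin_map_id]])
        (simp add: lin_map_sweedler_apply[OF bilin_map_compose_right[OF F lin_map_id]])
  qed
  finally show ?thesis .
qed

end

text \<open>Only that \<open>B\<^sub>1\<close> and \<open>B\<^sub>2\<close> are coalgebra maps is needed below.\<close>

locale rb_characters = hopf_characters sc cm eps ant scA
  for sc :: "'k::field_char_0 \<Rightarrow> 'h::ring_1 \<Rightarrow> 'h"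
    and cm :: "'h \<Rightarrow> ('h \<times> 'h) list"
    and eps :: "'h \<Rightarrow> 'k"
    and ant :: "'h \<Rightarrow> 'h"
    and scA :: "'k \<Rightarrow> 'a::comm_ring_1 \<Rightarrow> 'a" +
  fixes B1 B2 :: "'h \<Rightarrow> 'h"
  assumes coalg_hom_B1: "coalg_hom sc cm eps B1"
    and coalg_hom_B2: "coalg_hom sc cm eps B2"
begin

abbreviation H1 :: "'h set" where
  "H1 \<equiv> rb_H1 cm ant B1 B2"

lemma rb_cm1_in_H1:
  assumes "a \<in> H1"
  shows "set (rb_cm1 sc cm ant B1 B2 a) \<subseteq> H1 \<times> H1"
    and "teq2 sc (rb_cm1 sc cm ant B1 B2 a) (cm a)"
proof -
  obtain b where a: "a = rb_sigma cm ant B1 B2 b"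
    using assms by (auto simp: rb_H1_def)
  define xs where "xs = map (\<lambda>(u,v). (rb_sigma cm ant B1 B2 u, rb_sigma cm ant B1 B2 v)) (cm b)"
  have "set xs \<subseteq> H1 \<times> H1"
    by (auto simp: xs_def rb_H1_def)
  moreover have "teq2 sc xs (cm a)"
    unfolding teq2_def
  proof (intro allI impI)
    fix \<beta> :: "'h \<Rightarrow> 'h \<Rightarrow> 'k"
    assume "bilin sc \<beta>"
    then have "bilin_map sc (*) \<beta>"
      using vector_space by (simp add: bilin_iff_bilin_map)
    from sweedler_rb_sigma[OF coalg_hom_B1 coalg_hom_B2 vector_space_field this, of b]
    show "(\<Sum>(a,b)\<leftarrow>xs. \<beta> a b) = (\<Sum>(a,b)\<leftarrow>cm a. \<beta> a b)"
      by (simp add: a xs_def sweedler_def split_def o_def)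
  qed
  ultimately have "set (rb_cm1 sc cm ant B1 B2 a) \<subseteq> H1 \<times> H1 \<and> teq2 sc (rb_cm1 sc cm ant B1 B2 a) (cm a)"
    unfolding rb_cm1_def by (rule someI[where x = xs, OF conjI])
  then show "set (rb_cm1 sc cm ant B1 B2 a) \<subseteq> H1 \<times> H1" and "teq2 sc (rb_cm1 sc cm ant B1 B2 a) (cm a)"
    by auto
qed

lemma calB_convolution:
  assumes B: "coalg_hom sc cm eps B" and f: "f \<in> charH sc scA" and g: "g \<in> charH sc scA"
  shows "calB cm ant B1 B2 B (convolution f g)
    = calB cm ant B1 B2 B f \<otimes>\<^bsub>CharH1_grp sc cm eps ant B1 B2 scA\<^esub> calB cm ant B1 B2 B g"
proof
  fix a
  have lin: "lin_map sc scA f" "lin_map sc scA g"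
    using f g by (auto simp: mem_charH_iff)
  have linB: "lin_map sc scA (\<lambda>x. f (B x))" "lin_map sc scA (\<lambda>x. g (B x))"
    using lin_map_compose[OF lin_map_coalg_hom[OF B]] lin by auto
  show "calB cm ant B1 B2 B (convolution f g) a
    = (calB cm ant B1 B2 B f \<otimes>\<^bsub>CharH1_grp sc cm eps ant B1 B2 scA\<^esub> calB cm ant B1 B2 B g) a"
  proof (cases "a \<in> H1")
    case True
    note cm1 = rb_cm1_in_H1[OF True]
    have "(\<Sum>(x,y)\<leftarrow>rb_cm1 sc cm ant B1 B2 a. calB cm ant B1 B2 B f x * calB cm ant B1 B2 B g y)
        = (\<Sum>(x,y)\<leftarrow>rb_cm1 sc cm ant B1 B2 a. f (B x) * g (B y))"
      using cm1(1) by (intro arg_cong[where f = sum_list] map_cong) (auto simp: calB_def)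
    also have "\<dots> = (\<Sum>(x,y)\<leftarrow>cm a. f (B x) * g (B y))"
      by (rule teq2_sum_eq[OF vector_space vector_space_A cm1(2) bilin_map_mult_apply[OF linB]])
    also have "\<dots> = convolution f g (B a)"
      unfolding convolution_def sweedler_coalg_hom[OF B vector_space_A bilin_map_mult_apply[OF lin]]
      by (simp add: sweedler_def)
    finally show ?thesis
      using True by (simp add: CharH1_grp_def calB_def)
  next
    case False
    then show ?thesis
      by (simp add: CharH1_grp_def calB_def)
  qed
qed

lemma calB_conv_unit:
  "coalg_hom sc cm eps B \<Longrightarrow> calB cm ant B1 B2 B conv_unit = \<one>\<^bsub>CharH1_grp sc cm eps ant B1 B2 scA\<^esub>"
  by (simp add: calB_def CharH1_grp_def conv_unit_def coalg_hom_def fun_eq_iff)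

end

lemma group_hom_onto_image:
  assumes G: "group G"
    and mult: "\<And>x y. x \<in> carrier G \<Longrightarrow> y \<in> carrier G \<Longrightarrow> h (x \<otimes>\<^bsub>G\<^esub> y) = h x \<otimes>\<^bsub>M\<^esub> h y"
    and one: "h \<one>\<^bsub>G\<^esub> = \<one>\<^bsub>M\<^esub>"
  shows "group_hom G (M\<lparr>carrier := h ` carrier G\<rparr>) h"
proof -
  have hom: "h \<in> hom G (M\<lparr>carrier := h ` carrier G\<rparr>)"
    using mult by (auto simp: hom_def)
  have "group (M\<lparr>carrier := h ` carrier G\<rparr>)"
    using group.hom_imp_img_group[OF G hom] one by simp
  with G hom show ?thesis
    by (simp add: group_hom_def group_hom_axioms_def)
qed

lemma (in group_hom) rcos_image_hom:
  assumes onto: "h ` carrier G = carrier H" and K: "K \<lhd> G"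
  shows "group_hom G (H Mod h ` K) (\<lambda>f. h ` K #>\<^bsub>H\<^esub> h f)"
    and "(\<lambda>f. h ` K #>\<^bsub>H\<^esub> h f) ` carrier G = carrier (H Mod h ` K)"
proof -
  interpret N: normal "h ` K" H
    by (rule normal.surj_hom_normal_subgroup[OF K group_hom_axioms onto])
  have "(\<lambda>a. h ` K #>\<^bsub>H\<^esub> a) \<circ> h \<in> hom G (H Mod h ` K)"
    using Group.hom_compose[OF homh N.r_coset_hom_Mod] .
  then show "group_hom G (H Mod h ` K) (\<lambda>f. h ` K #>\<^bsub>H\<^esub> h f)"
    using N.factorgroup_is_group by (simp add: group_hom_def group_hom_axioms_def o_def G.group_axioms)
  show "(\<lambda>f. h ` K #>\<^bsub>H\<^esub> h f) ` carrier G = carrier (H Mod h ` K)"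
    unfolding carrier_FactGroup onto[symmetric] by (simp add: image_image)
qed

lemma (in group_hom) kernel_rcos_image:
  assumes onto: "h ` carrier G = carrier H" and K: "K \<lhd> G"
  shows "kernel G (H Mod h ` K) (\<lambda>f. h ` K #>\<^bsub>H\<^esub> h f) = K <#>\<^bsub>G\<^esub> kernel G H h"
proof -
  interpret K: normal K G
    by (rule K)
  interpret N: normal "h ` K" H
    by (rule K.surj_hom_normal_subgroup[OF group_hom_axioms onto])
  have "h ` K #>\<^bsub>H\<^esub> h f = h ` K \<longleftrightarrow> f \<in> K <#>\<^bsub>G\<^esub> kernel G H h" if f: "f \<in> carrier G" for f
  proof -
    have "h ` K #>\<^bsub>H\<^esub> h f = h ` K \<longleftrightarrow> h f \<in> h ` K"
    proof
      assume "h ` K #>\<^bsub>H\<^esub> h f = h ` K"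
      then show "h f \<in> h ` K"
        using f by (auto intro: H.coset_join1[OF _ _ N.subgroup_axioms])
    qed (rule N.rcos_const[OF H.group_axioms])
    also have "\<dots> \<longleftrightarrow> (\<exists>k\<in>K. inv k \<otimes> f \<in> kernel G H h)"
    proof -
      have "h f = h k \<longleftrightarrow> inv k \<otimes> f \<in> kernel G H h" if "k \<in> K" for k
        using that f K.subset by (auto simp: kernel_def hom_inv H.inv_solve_left')
      then show ?thesis
        by blast
    qed
    also have "\<dots> \<longleftrightarrow> f \<in> K <#>\<^bsub>G\<^esub> kernel G H h"
    proof -
      have "f = k \<otimes> (inv k \<otimes> f)" if "k \<in> K" for k
        using that f K.subset by (auto simp: G.m_assoc[symmetric])
      moreover have "inv k \<otimes> (k \<otimes> x) \<in> kernel G H h" if "k \<in> K" "x \<in> kernel G H h" for k x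
        using that K.subset by (auto simp: kernel_def G.m_assoc[symmetric])
      ultimately show ?thesis
        unfolding set_mult_def by blast
    qed
    finally show ?thesis .
  qed
  moreover have "K <#>\<^bsub>G\<^esub> kernel G H h \<subseteq> carrier G"
    using K.subset by (auto simp: set_mult_def kernel_def)
  ultimately show ?thesis
    unfolding kernel_def by auto
qed

lemma (in group_hom) the_elem_image_rcos_kernel:
  "f \<in> carrier G \<Longrightarrow> the_elem (h ` (kernel G H h #> f)) = h f"
proof -
  assume f: "f \<in> carrier G"
  then have "f \<in> kernel G H h #> f"
    by (rule G.rcos_self[OF _ subgroup_kernel])
  then have "kernel G H h #> f \<noteq> {}"
    by blast
  moreover have "h x = h f" if "x \<in> kernel G H h #> f" for x
    using that f by (auto simp: r_coset_def kernel_def)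
  ultimately show ?thesis
    by (rule the_elem_image_unique)
qed

lemma iso_of_surj_homs_same_kernel:
  assumes hom1: "group_hom G Q1 \<phi>1" and onto1: "\<phi>1 ` carrier G = carrier Q1"
    and hom2: "group_hom G Q2 \<phi>2" and onto2: "\<phi>2 ` carrier G = carrier Q2"
    and kernel_eq: "kernel G Q1 \<phi>1 = kernel G Q2 \<phi>2"
  shows "\<exists>\<Theta>. \<Theta> \<in> iso Q1 Q2 \<and> (\<forall>f \<in> carrier G. \<Theta> (\<phi>1 f) = \<phi>2 f)"
proof -
  interpret \<phi>1: group_hom G Q1 \<phi>1 by (rule hom1)
  interpret \<phi>2: group_hom G Q2 \<phi>2 by (rule hom2)
  define K where "K = kernel G Q1 \<phi>1"
  define i1 where "i1 X = the_elem (\<phi>1 ` X)" for X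
  define i2 where "i2 X = the_elem (\<phi>2 ` X)" for X
  have iso1: "i1 \<in> iso (G Mod K) Q1"
    unfolding K_def i1_def by (rule \<phi>1.FactGroup_iso_set[OF onto1])
  have iso2: "i2 \<in> iso (G Mod K) Q2"
    unfolding K_def kernel_eq i2_def by (rule \<phi>2.FactGroup_iso_set[OF onto2])
  have group_Mod: "group (G Mod K)"
    unfolding K_def by (rule normal.factorgroup_is_group[OF \<phi>1.normal_kernel])
  define \<Theta> where "\<Theta> = i2 \<circ> inv_into (carrier (G Mod K)) i1"
  have "\<Theta> \<in> iso Q1 Q2"
    unfolding \<Theta>_def by (rule iso_set_trans[OF group.iso_set_sym[OF group_Mod iso1] iso2])
  moreover have "\<Theta> (\<phi>1 f) = \<phi>2 f" if f: "f \<in> carrier G" for f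
  proof -
    have "K #>\<^bsub>G\<^esub> f \<in> carrier (G Mod K)"
      unfolding carrier_FactGroup using f by (rule imageI)
    moreover have "inj_on i1 (carrier (G Mod K))"
      using iso1 by (simp add: iso_def bij_betw_def)
    ultimately have "inv_into (carrier (G Mod K)) i1 (i1 (K #>\<^bsub>G\<^esub> f)) = K #>\<^bsub>G\<^esub> f"
      by (rule inv_into_f_f[rotated])
    moreover have "i1 (K #>\<^bsub>G\<^esub> f) = \<phi>1 f"
      unfolding i1_def K_def by (rule \<phi>1.the_elem_image_rcos_kernel[OF f])
    moreover have "i2 (K #>\<^bsub>G\<^esub> f) = \<phi>2 f"
      unfolding i2_def K_def kernel_eq by (rule \<phi>2.the_elem_image_rcos_kernel[OF f])
    ultimately show ?thesis
      by (simp add: \<Theta>_def)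
  qed
  ultimately show ?thesis
    by blast
qed

text \<open>Both quotients are \<open>G / (ker h\<^sub>1 \<cdot> ker h\<^sub>2)\<close>: the kernel of \<open>f \<mapsto> h\<^sub>1(ker h\<^sub>2) h\<^sub>1(f)\<close> is
  \<open>ker h\<^sub>2 \<cdot> ker h\<^sub>1\<close>, a product of normal subgroups and hence symmetric.\<close>

theorem cayley_transform_iso:
  assumes G: "group G"
    and mult1: "\<And>x y. x \<in> carrier G \<Longrightarrow> y \<in> carrier G \<Longrightarrow> h1 (x \<otimes>\<^bsub>G\<^esub> y) = h1 x \<otimes>\<^bsub>M\<^esub> h1 y"
    and one1: "h1 \<one>\<^bsub>G\<^esub> = \<one>\<^bsub>M\<^esub>"
    and mult2: "\<And>x y. x \<in> carrier G \<Longrightarrow> y \<in> carrier G \<Longrightarrow> h2 (x \<otimes>\<^bsub>G\<^esub> y) = h2 x \<otimes>\<^bsub>M\<^esub> h2 y"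
    and one2: "h2 \<one>\<^bsub>G\<^esub> = \<one>\<^bsub>M\<^esub>"
  defines "I1 \<equiv> M\<lparr>carrier := h1 ` carrier G\<rparr>" and "I2 \<equiv> M\<lparr>carrier := h2 ` carrier G\<rparr>"
    and "N1 \<equiv> h1 ` kernel G M h2" and "N2 \<equiv> h2 ` kernel G M h1"
  shows "\<exists>\<Theta>. \<Theta> \<in> iso (I1 Mod N1) (I2 Mod N2) \<and> (\<forall>f \<in> carrier G. \<Theta> (N1 #>\<^bsub>I1\<^esub> h1 f) = N2 #>\<^bsub>I2\<^esub> h2 f)"
proof -
  interpret G: group G by (rule G)
  have hom1: "group_hom G I1 h1"
    unfolding I1_def using G mult1 one1 by (rule group_hom_onto_image)
  have hom2: "group_hom G I2 h2"
    unfolding I2_def using G mult2 one2 by (rule group_hom_onto_image)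
  have kernel1: "kernel G M h1 = kernel G I1 h1" and kernel2: "kernel G M h2 = kernel G I2 h2"
    by (simp_all add: kernel_def I1_def I2_def)
  have normal: "kernel G M h1 \<lhd> G" "kernel G M h2 \<lhd> G"
    unfolding kernel1 kernel2 by (intro group_hom.normal_kernel hom1 hom2)+
  have onto: "h1 ` carrier G = carrier I1" "h2 ` carrier G = carrier I2"
    by (simp_all add: I1_def I2_def)
  note quot1 = group_hom.rcos_image_hom[OF hom1 onto(1) normal(2), folded N1_def]
    group_hom.kernel_rcos_image[OF hom1 onto(1) normal(2), folded N1_def kernel1]
  note quot2 = group_hom.rcos_image_hom[OF hom2 onto(2) normal(1), folded N2_def]
    group_hom.kernel_rcos_image[OF hom2 onto(2) normal(1), folded N2_def kernel2]
  have "kernel G M h2 <#>\<^bsub>G\<^esub> kernel G M h1 = kernel G M h1 <#>\<^bsub>G\<^esub> kernel G M h2"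
    using G.commut_normal[OF normal_imp_subgroup[OF normal(2)] normal(1)] .
  then show ?thesis
    using quot1 quot2 by (intro iso_of_surj_homs_same_kernel) auto
qed

theorem mainTheorem13:
  fixes sc :: "'k::field_char_0 \<Rightarrow> 'h::ring_1 \<Rightarrow> 'h"
    and cm :: "'h \<Rightarrow> ('h \<times> 'h) list"
    and eps :: "'h \<Rightarrow> 'k"
    and ant B1 B2 :: "'h \<Rightarrow> 'h"
    and scA :: "'k \<Rightarrow> 'a::comm_ring_1 \<Rightarrow> 'a"
  assumes "rb_system sc cm eps ant B1 B2"
    and "comm_algebra scA"
  defines "G \<equiv> CharH_grp sc cm eps scA"
    and "G1 \<equiv> CharH1_grp sc cm eps ant B1 B2 scA"
    and "\<B>1 \<equiv> calB cm ant B1 B2 B1"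
    and "\<B>2 \<equiv> calB cm ant B1 B2 B2"
  defines "Im1 \<equiv> G1\<lparr>carrier := \<B>1 ` carrier G\<rparr>"
    and "Im2 \<equiv> G1\<lparr>carrier := \<B>2 ` carrier G\<rparr>"
    and "N1 \<equiv> \<B>1 ` kernel G G1 \<B>2"
    and "N2 \<equiv> \<B>2 ` kernel G G1 \<B>1"
  shows "\<exists>\<Theta>. \<Theta> \<in> iso (Im1 Mod N1) (Im2 Mod N2) \<and>
              (\<forall>f \<in> carrier G. \<Theta> (N1 #>\<^bsub>Im1\<^esub> \<B>1 f) = N2 #>\<^bsub>Im2\<^esub> \<B>2 f)"
proof -
  interpret rb_characters sc cm eps ant scA B1 B2
    using assms(1,2)
    by (simp add: rb_characters_def rb_characters_axioms_def hopf_characters_def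
        hopf_characters_axioms_def cocomm_hopf_algebra_def rb_system_def)
  show ?thesis
    unfolding Im1_def Im2_def N1_def N2_def
  proof (rule cayley_transform_iso)
    show "group G"
      unfolding G_def by (rule group_CharH_grp)
    show "\<B>1 (x \<otimes>\<^bsub>G\<^esub> y) = \<B>1 x \<otimes>\<^bsub>G1\<^esub> \<B>1 y" "\<B>2 (x \<otimes>\<^bsub>G\<^esub> y) = \<B>2 x \<otimes>\<^bsub>G1\<^esub> \<B>2 y"
      if "x \<in> carrier G" "y \<in> carrier G" for x y
      using that unfolding G_def G1_def \<B>1_def \<B>2_def CharH_grp_simps
      by (simp_all add: calB_convolution coalg_hom_B1 coalg_hom_B2)
    show "\<B>1 \<one>\<^bsub>G\<^esub> = \<one>\<^bsub>G1\<^esub>" "\<B>2 \<one>\<^bsub>G\<^esub> = \<one>\<^bsub>G1\<^esub>"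
      unfolding G_def G1_def \<B>1_def \<B>2_def CharH_grp_simps
      by (simp_all add: calB_conv_unit coalg_hom_B1 coalg_hom_B2)
  qed
qed

end
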